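(* Let $\beta>0$ and $x\in(\lambda_t^-,\lambda^+)$, and let $\alpha^*$ be such that $\psi_x^*(0)=\int\log(1+\alpha^*(x-\lambda))\,d\mu_\lambda$. Then $$\alpha^*=\begin{cases}\frac{1}{\lambda^+-x} & \text{if } x\ge1+\sqrt\beta,\\ -\frac{1}{x-\lambda^-} & \text{if } x\le1-\sqrt\beta\text{ and }\beta<1,\\ \frac1\beta\frac{x-1}{x} & \text{otherwise.}\end{cases}$$
   Context: Let $\lambda^\pm=(1\pm\sqrt\beta)^2$, $\mu_\lambda$ the probability measure $d\mu_\lambda=\Big((1-\tfrac1\beta)^+\delta(\lambda)+\frac{\sqrt{(\lambda-\lambda^-)^+(\lambda^+-\lambda)^+}}{2\pi\beta\lambda}\Big)d\lambda$, $\lambda_t^-=0$ if $\beta\ge1$ and $=\lambda^-$ if $\beta<1$. For $x\in(\lambda_t^-,\lambda^+)$, $\psi_x(\alpha)=-\int\log(1-\alpha(\lambda-x))\,d\mu_\lambda$ for $\alpha\in[-\frac1{x-\lambda_t^-},\frac1{\lambda^+-x}]$ and $+\infty$ otherwise, and $\psi_x^*(t)=\sup_{\alpha\in\mathbb R}(\alpha t-\psi_x(\alpha))$. *)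

theory Defs
  imports "HOL-Analysis.Analysis"
begin

definition lam_plus :: "real \<Rightarrow> real" where
  "lam_plus \<beta> = (1 + sqrt \<beta>)^2"

definition lam_minus :: "real \<Rightarrow> real" where
  "lam_minus \<beta> = (1 - sqrt \<beta>)^2"

definition lam_t_minus :: "real \<Rightarrow> real" where
  "lam_t_minus \<beta> = (if \<beta> \<ge> 1 then 0 else lam_minus \<beta>)"

definition mp_density :: "real \<Rightarrow> real \<Rightarrow> real" where
  "mp_density \<beta> l =
     sqrt (max 0 (l - lam_minus \<beta>) * max 0 (lam_plus \<beta> - l)) / (2 * pi * \<beta> * l)"

definition mp_measure :: "real \<Rightarrow> real measure" where
  "mp_measure \<beta> = measure_of UNIV (sets borel)
     (\<lambda>A. ennreal (max 0 (1 - 1/\<beta>)) * indicator A 0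
          + (\<integral>\<^sup>+ l. ennreal (mp_density \<beta> l) * indicator A l \<partial>lborel))"

text \<open>psi_x(alpha) as an extended real: the integral of -log(1 - alpha(l - x)) is
  +infinity unless the argument is a.e. positive and the logarithm is integrable
  (the negative part of -log is bounded on the compact support).\<close>
definition psi :: "real \<Rightarrow> real \<Rightarrow> real \<Rightarrow> ereal" where
  "psi \<beta> x \<alpha> =
     (if \<alpha> \<in> {-1 / (x - lam_t_minus \<beta>) .. 1 / (lam_plus \<beta> - x)}
         \<and> (AE l in mp_measure \<beta>. 1 - \<alpha> * (l - x) > 0)
         \<and> integrable (mp_measure \<beta>) (\<lambda>l. ln (1 - \<alpha> * (l - x)))
      then ereal (- (\<integral>l. ln (1 - \<alpha> * (l - x)) \<partial>mp_measure \<beta>))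
      else \<infinity>)"

definition psi_star :: "real \<Rightarrow> real \<Rightarrow> real \<Rightarrow> ereal" where
  "psi_star \<beta> x t = (SUP \<alpha>\<in>(UNIV::real set). ereal (\<alpha> * t) - psi \<beta> x \<alpha>)"

end

theory Submission
  imports Defs "HOL-Probability.Probability_Measure"
begin

text \<open>Since \<open>\<psi>\<^sup>*\<^sub>x(0) = - inf \<psi>\<^sub>x\<close>, the hypothesis says that \<open>\<alpha>\<^sup>*\<close> minimises \<open>\<psi>\<^sub>x\<close>. By strict
  concavity of the logarithm (\<open>ln u - ln v < (u - v) / v\<close> for \<open>u \<noteq> v\<close>), a point \<open>\<alpha>\<close> of the
  domain with \<open>(\<alpha>' - \<alpha>) \<psi>\<^sub>x'(\<alpha>) \<ge> 0\<close> for every \<open>\<alpha>'\<close> of the domain is the unique minimiser, so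
  it suffices to check this first-order condition at the claimed value. With \<open>w = x + 1 / \<alpha>\<close> one
  has \<open>1 - \<alpha> (\<lambda> - x) = \<alpha> (w - \<lambda>)\<close>, hence \<open>\<psi>\<^sub>x'(\<alpha>) = (S(w) / \<alpha> - 1) / \<alpha>\<close>, where \<open>S\<close> is the
  Stieltjes transform of \<open>\<mu>\<close>, computed in closed form from elementary primitives over the
  semicircle. For \<open>x \<ge> 1 + \<surd>\<beta>\<close> the value \<open>\<alpha> = 1 / (\<lambda>\<^sup>+ - x)\<close> gives \<open>w = \<lambda>\<^sup>+\<close> and \<open>\<psi>\<^sub>x'(\<alpha>) \<le> 0\<close>;
  for \<open>x \<le> 1 - \<surd>\<beta>\<close> the value \<open>\<alpha> = -1 / (x - \<lambda>\<^sup>-)\<close> gives \<open>w = \<lambda>\<^sup>-\<close> and \<open>\<psi>\<^sub>x'(\<alpha>) \<ge> 0\<close>; in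
  between, \<open>\<alpha> = (x - 1) / (\<beta> x)\<close> solves the stationarity equation \<open>S(x + 1 / \<alpha>) = \<alpha>\<close>.\<close>

lemma has_integral_one_signed_imp_lborel:
  fixes f :: "real \<Rightarrow> real"
  assumes f: "(f has_integral I) {a..b}" and [measurable]: "f \<in> borel_measurable borel"
    and sign: "(\<forall>x\<in>{a..b}. 0 \<le> f x) \<or> (\<forall>x\<in>{a..b}. f x \<le> 0)"
  shows "integrable lborel (\<lambda>x. indicator {a..b} x * f x)"
    "(\<integral>x. indicator {a..b} x * f x \<partial>lborel) = I"
proof -
  have int: "f integrable_on {a..b}" "(\<lambda>x. - f x) integrable_on {a..b}"
    using f by (auto simp: integrable_on_def intro: has_integral_neg)
  have "(\<lambda>x. norm (f x)) integrable_on {a..b}"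
    using sign by (auto intro: integrable_eq[OF int(1)] integrable_eq[OF int(2)])
  then have abs_int: "f absolutely_integrable_on {a..b}"
    by (rule absolutely_integrable_onI[OF int(1)])
  have meas: "(\<lambda>x. indicator {a..b} x * f x) \<in> borel_measurable lborel"
    by measurable
  show "integrable lborel (\<lambda>x. indicator {a..b} x * f x)"
    using abs_int integrable_completion[OF meas] by (simp add: set_integrable_def)
  have "(LINT x:{a..b}|lebesgue. f x) = I"
    using set_lebesgue_integral_eq_integral(2)[OF abs_int] integral_unique[OF f] by simp
  then show "(\<integral>x. indicator {a..b} x * f x \<partial>lborel) = I"
    using integral_completion[OF meas] by (simp add: set_lebesgue_integral_def)
qed

lemma abs_ln_le:
  assumes "0 < (v::real)" shows "\<bar>ln v\<bar> \<le> v + 1 / v"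
proof -
  have "0 < 1 / v" using assms by simp
  moreover have "ln v \<le> v - 1" "- ln v \<le> 1 / v - 1"
    using assms ln_le_minus_one[of v] ln_le_minus_one[of "1 / v"] by (simp_all add: ln_div)
  ultimately show ?thesis
    using assms by (simp only: abs_le_iff) linarith
qed

lemma integrable_ln:
  fixes f :: "'a \<Rightarrow> real"
  assumes f: "integrable M f" "integrable M (\<lambda>x. 1 / f x)" and pos: "AE x in M. 0 < f x"
  shows "integrable M (\<lambda>x. ln (f x))"
proof (rule Bochner_Integration.integrable_bound)
  show "integrable M (\<lambda>x. f x + 1 / f x)"
    using f by (rule Bochner_Integration.integrable_add)
  show "(\<lambda>x. ln (f x)) \<in> borel_measurable M"
    using borel_measurable_integrable[OF f(1)] by measurable
  show "AE x in M. norm (ln (f x)) \<le> norm (f x + 1 / f x)"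
    using pos by eventually_elim (use abs_ln_le in \<open>auto intro: order_trans[OF _ abs_ge_self]\<close>)
qed

lemma (in finite_measure) integral_ln_less:
  fixes f g :: "'a \<Rightarrow> real"
  assumes M: "emeasure M (space M) \<noteq> 0"
    and pos: "AE x in M. 0 < f x" "AE x in M. 0 < g x" and ne: "AE x in M. f x \<noteq> g x"
    and int: "integrable M (\<lambda>x. ln (f x))" "integrable M (\<lambda>x. ln (g x))"
      "integrable M (\<lambda>x. (g x - f x) / f x)"
  shows "(\<integral>x. ln (g x) \<partial>M) < (\<integral>x. ln (f x) \<partial>M) + (\<integral>x. (g x - f x) / f x \<partial>M)"
proof -
  have "AE x in M. ln (g x) - ln (f x) < (g x - f x) / f x"
    using pos ne by eventually_elim (rule ln_diff_less, auto)
  then have "(\<integral>x. ln (g x) - ln (f x) \<partial>M) < (\<integral>x. (g x - f x) / f x \<partial>M)"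
    using int M by (intro integral_less_AE_space) auto
  then show ?thesis
    using int by simp
qed

lemma integral_affine_quotient:
  fixes M :: "real measure" and x a :: real
  assumes M: "prob_space M" "sets M = sets borel" and a: "a \<noteq> 0"
    and int: "integrable M (\<lambda>l. 1 / (x + 1 / a - l))" and ne: "AE l in M. l \<noteq> x + 1 / a"
  shows "integrable M (\<lambda>l. 1 / (1 - a * (l - x)))"
    "integrable M (\<lambda>l. (l - x) / (1 - a * (l - x)))"
    "(\<integral>l. (l - x) / (1 - a * (l - x)) \<partial>M) = ((\<integral>l. 1 / (x + 1 / a - l) \<partial>M) / a - 1) / a"
proof -
  interpret prob_space M by (rule M(1))
  have [measurable_cong]: "sets M = sets borel" by (rule M(2))
  have affine: "1 - a * (l - x) = a * (x + 1 / a - l)" for l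
    using a by (simp add: algebra_simps)
  show "integrable M (\<lambda>l. 1 / (1 - a * (l - x)))"
    unfolding affine using integrable_mult_right[OF int, of "1 / a"] by simp
  define q where "q = (\<lambda>l. 1 / a\<^sup>2 * (1 / (x + 1 / a - l)) - 1 / a)"
  have ae: "AE l in M. (l - x) / (1 - a * (l - x)) = q l"
  proof (rule AE_mp[OF ne], intro AE_I2 impI)
    fix l assume "l \<noteq> x + 1 / a"
    define d where "d = x + 1 / a - l"
    have d: "d \<noteq> 0" "l - x = 1 / a - d"
      using \<open>l \<noteq> x + 1 / a\<close> by (auto simp: d_def)
    have "(l - x) / (1 - a * (l - x)) = (1 / a - d) / (a * d)"
      unfolding affine d_def[symmetric] by (simp only: d(2))
    also have "\<dots> = q l"
      unfolding q_def d_def[symmetric] using a d(1) by (simp add: field_simps power2_eq_square)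
    finally show "(l - x) / (1 - a * (l - x)) = q l" .
  qed
  have int_q: "integrable M q"
    unfolding q_def using int by (intro Bochner_Integration.integrable_diff integrable_mult_right) auto
  show "integrable M (\<lambda>l. (l - x) / (1 - a * (l - x)))"
    by (rule integrable_cong_AE_imp[OF int_q _ AE_symmetric[OF ae]]) measurable
  have "(\<integral>l. (l - x) / (1 - a * (l - x)) \<partial>M) = (\<integral>l. q l \<partial>M)"
    using ae by (intro integral_cong_AE) (simp_all add: q_def)
  also have "\<dots> = (\<integral>l. 1 / a\<^sup>2 * (1 / (x + 1 / a - l)) \<partial>M) - (\<integral>l. 1 / a \<partial>M)"
    unfolding q_def using int by (intro Bochner_Integration.integral_diff integrable_mult_right) auto
  also have "\<dots> = 1 / a\<^sup>2 * (\<integral>l. 1 / (x + 1 / a - l) \<partial>M) - 1 / a"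
    by (simp only: integral_mult_right_zero) (simp add: prob_space)
  also have "\<dots> = ((\<integral>l. 1 / (x + 1 / a - l) \<partial>M) / a - 1) / a"
    using a by (simp add: field_simps power2_eq_square)
  finally show "(\<integral>l. (l - x) / (1 - a * (l - x)) \<partial>M) = ((\<integral>l. 1 / (x + 1 / a - l) \<partial>M) / a - 1) / a" .
qed

section \<open>Integrals over a semicircle\<close>

definition semicircle :: "real \<Rightarrow> real \<Rightarrow> real \<Rightarrow> real" where
  "semicircle c r l = sqrt ((l - (c - r)) * ((c + r) - l))"

lemma semicircle_sq:
  assumes "c - r \<le> l" "l \<le> c + r"
  shows "(semicircle c r l)\<^sup>2 = r\<^sup>2 - (l - c)\<^sup>2"
  using assms by (simp add: semicircle_def) (simp add: power2_eq_square algebra_simps)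

lemma semicircle_pos: "c - r < l \<Longrightarrow> l < c + r \<Longrightarrow> semicircle c r l > 0"
  by (simp add: semicircle_def)

lemma semicircle_nonneg: "l \<in> {c - r..c + r} \<Longrightarrow> 0 \<le> semicircle c r l"
  by (simp add: semicircle_def)

lemma semicircle_endpoints [simp]: "semicircle c r (c + r) = 0" "semicircle c r (c - r) = 0"
  by (simp_all add: semicircle_def)

lemma borel_measurable_semicircle [measurable]: "semicircle c r \<in> borel_measurable borel"
  unfolding semicircle_def by measurable

lemma continuous_on_semicircle: "continuous_on S (semicircle c r)"
  unfolding semicircle_def by (intro continuous_intros)

lemma has_real_derivative_semicircle:
  assumes "c - r < l" "l < c + r"
  shows "(semicircle c r has_real_derivative (c - l) / semicircle c r l) (at l)"
proof -
  have pos: "(l - (c - r)) * ((c + r) - l) > 0"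
    using assms by simp
  have "((\<lambda>l. (l - (c - r)) * ((c + r) - l)) has_real_derivative (c + r - l) - (l - (c - r))) (at l)"
    by (auto intro!: derivative_eq_intros)
  from DERIV_chain2[OF DERIV_real_sqrt[OF pos] this] show ?thesis
    unfolding semicircle_def by (rule DERIV_cong) (simp add: divide_simps)
qed

lemma has_real_derivative_arcsin_semicircle:
  assumes "r > 0" "c - r < l" "l < c + r"
  shows "((\<lambda>l. arcsin ((l - c) / r)) has_real_derivative 1 / semicircle c r l) (at l)"
proof -
  have bounds: "-1 < (l - c) / r" "(l - c) / r < 1"
    using assms by (auto simp: field_simps)
  have "1 - ((l - c) / r)\<^sup>2 = (semicircle c r l / r)\<^sup>2"
    using assms semicircle_sq[of c r l] by (simp add: field_simps power_divide)
  then have "sqrt (1 - ((l - c) / r)\<^sup>2) = semicircle c r l / r"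
    using semicircle_pos[of c r l] assms by simp
  moreover have "((\<lambda>l. (l - c) / r) has_real_derivative 1 / r) (at l)"
    using assms by (auto intro!: derivative_eq_intros)
  ultimately show ?thesis
    using DERIV_chain2[OF DERIV_arcsin[OF bounds] \<open>(_ has_real_derivative 1 / r) _\<close>] \<open>r > 0\<close>
    by (simp add: divide_simps)
qed

text \<open>This substitution rationalises \<open>semicircle c r l / (a - l)\<close> and maps \<open>[c - r, c + r]\<close>
  onto \<open>[-1, 1]\<close> when \<open>r < \<bar>a - c\<bar>\<close>.\<close>

definition moebius_subst :: "real \<Rightarrow> real \<Rightarrow> real \<Rightarrow> real \<Rightarrow> real" where
  "moebius_subst c r a l = (r\<^sup>2 - (a - c) * (l - c)) / (r * (a - l))"

lemma one_minus_moebius_subst_sq: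
  assumes "r \<noteq> 0" "a \<noteq> l"
  shows "1 - (moebius_subst c r a l)\<^sup>2 = ((a - c)\<^sup>2 - r\<^sup>2) * (r\<^sup>2 - (l - c)\<^sup>2) / (r\<^sup>2 * (a - l)\<^sup>2)"
  using assms by (simp add: moebius_subst_def power_divide power_mult_distrib divide_simps)
    (simp add: power2_eq_square algebra_simps)

lemma moebius_subst_bounds:
  assumes "r > 0" "r < \<bar>a - c\<bar>" "l \<in> {c - r..c + r}"
  shows "-1 \<le> moebius_subst c r a l \<and> moebius_subst c r a l \<le> 1"
proof -
  have "a \<noteq> l" "r\<^sup>2 < (a - c)\<^sup>2" "(l - c)\<^sup>2 \<le> r\<^sup>2"
    using assms abs_le_square_iff[of "a - c" r] abs_le_square_iff[of "l - c" r] by auto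
  then have "0 \<le> 1 - (moebius_subst c r a l)\<^sup>2"
    using assms by (subst one_minus_moebius_subst_sq) auto
  then have "\<bar>moebius_subst c r a l\<bar> \<le> 1"
    by (simp only: abs_square_le_1 [symmetric])
  then show ?thesis
    by (auto simp: abs_le_iff)
qed

lemma moebius_subst_endpoints:
  assumes "r > 0" "r < \<bar>a - c\<bar>"
  shows "moebius_subst c r a (c + r) = -1" "moebius_subst c r a (c - r) = 1"
proof -
  have "r * (a - (c + r)) \<noteq> 0" "r * (a - (c - r)) \<noteq> 0"
    using assms by auto
  moreover have "r\<^sup>2 - (a - c) * (c + r - c) = - (r * (a - (c + r)))"
    "r\<^sup>2 - (a - c) * (c - r - c) = r * (a - (c - r))"
    by (simp_all add: power2_eq_square algebra_simps)
  ultimately show "moebius_subst c r a (c + r) = -1" "moebius_subst c r a (c - r) = 1"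
    unfolding moebius_subst_def by simp_all
qed

lemma continuous_on_arcsin_moebius_subst:
  assumes "r > 0" "r < \<bar>a - c\<bar>"
  shows "continuous_on {c - r..c + r} (\<lambda>l. arcsin (moebius_subst c r a l))"
proof (rule continuous_on_arcsin)
  have "\<forall>l\<in>{c - r..c + r}. a - l \<noteq> 0" using assms by auto
  then show "continuous_on {c - r..c + r} (moebius_subst c r a)"
    unfolding moebius_subst_def using assms by (intro continuous_intros) auto
qed (use moebius_subst_bounds[OF assms] in blast)

lemma has_real_derivative_arcsin_moebius_subst:
  assumes r: "r > 0" and d: "r < \<bar>a - c\<bar>" and l: "c - r < l" "l < c + r"
  shows "((\<lambda>l. arcsin (moebius_subst c r a l)) has_real_derivative
           - sgn (a - c) * sqrt ((a - c)\<^sup>2 - r\<^sup>2) / ((a - l) * semicircle c r l)) (at l)"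
proof -
  define d S R where "d = a - c" and "S = sqrt ((a - c)\<^sup>2 - r\<^sup>2)" and "R = semicircle c r l"
  have sgn_al: "sgn d * (a - l) > 0" using d l by (auto simp: d_def sgn_if)
  then have "a \<noteq> l" by auto
  have "r\<^sup>2 < d\<^sup>2" using d abs_le_square_iff[of d r] r by (auto simp: d_def)
  then have S: "S > 0" "r\<^sup>2 - d\<^sup>2 = - S\<^sup>2" by (auto simp: S_def d_def)
  have R: "R > 0" "R\<^sup>2 = r\<^sup>2 - (l - c)\<^sup>2"
    using l semicircle_pos[of c r l] semicircle_sq[of c r l] by (auto simp: R_def)
  have "1 - (moebius_subst c r a l)\<^sup>2 = (S * R / (r * (a - l)))\<^sup>2"
    using r \<open>a \<noteq> l\<close> S(2) unfolding one_minus_moebius_subst_sq[OF r[THEN less_imp_neq, symmetric] \<open>a \<noteq> l\<close>]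
    by (simp add: power_divide power_mult_distrib R d_def)
  moreover have "\<bar>S * R / (r * (a - l))\<bar> = S * R / (r * (sgn d * (a - l)))"
    using S R r sgn_al by (auto simp: abs_mult abs_divide sgn_if split: if_splits)
  ultimately have sq: "sqrt (1 - (moebius_subst c r a l)\<^sup>2) = S * R / (r * (sgn d * (a - l)))"
    by simp
  then have "(moebius_subst c r a l)\<^sup>2 < 1"
    using S R r sgn_al by (smt (verit) divide_pos_pos mult_pos_pos real_sqrt_le_0_iff)
  then have bounds: "-1 < moebius_subst c r a l" "moebius_subst c r a l < 1"
    by (auto simp: abs_square_less_1)
  have "(moebius_subst c r a has_real_derivative (r\<^sup>2 - d\<^sup>2) / (r * (a - l)\<^sup>2)) (at l)"
    unfolding moebius_subst_def[abs_def] using r \<open>a \<noteq> l\<close>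
    by (auto intro!: derivative_eq_intros simp: d_def divide_simps)
      (simp add: power2_eq_square algebra_simps)
  note chain = DERIV_chain2[OF DERIV_arcsin[OF bounds] this]
  have "inverse (sqrt (1 - (moebius_subst c r a l)\<^sup>2)) * ((r\<^sup>2 - d\<^sup>2) / (r * (a - l)\<^sup>2))
      = - sgn d * S / ((a - l) * R)"
    unfolding sq \<open>r\<^sup>2 - d\<^sup>2 = - S\<^sup>2\<close>
    using S R r \<open>a \<noteq> l\<close> by (simp add: divide_simps) (simp add: power2_eq_square algebra_simps)
  from DERIV_cong[OF chain this] show ?thesis
    by (simp add: S_def R_def d_def)
qed

lemma has_integral_semicircle:
  assumes r: "r > 0"
  shows "(semicircle c r has_integral pi * r\<^sup>2 / 2) {c - r..c + r}"
proof -
  define F where "F = (\<lambda>l. ((l - c) * semicircle c r l + r\<^sup>2 * arcsin ((l - c) / r)) / 2)"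
  have "continuous_on {c - r..c + r} F"
    unfolding F_def using r
    by (intro continuous_intros continuous_on_semicircle) (auto simp: field_simps)
  moreover have "(F has_real_derivative semicircle c r l) (at l)" if "c - r < l" "l < c + r" for l
  proof -
    have R: "semicircle c r l > 0" "(semicircle c r l)\<^sup>2 = r\<^sup>2 - (l - c)\<^sup>2"
      using that semicircle_pos[of c r l] semicircle_sq[of c r l] by auto
    have "((\<lambda>l. l - c) has_real_derivative 1) (at l)"
      by (auto intro!: derivative_eq_intros)
    then have "(F has_real_derivative
        (1 * semicircle c r l + (c - l) / semicircle c r l * (l - c) + r\<^sup>2 * (1 / semicircle c r l)) / 2) (at l)"
      unfolding F_def
      by (intro DERIV_cdivide DERIV_add DERIV_mult has_real_derivative_semicircle that
          DERIV_cmult has_real_derivative_arcsin_semicircle r)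
    then show ?thesis
      by (rule DERIV_cong) (use R in \<open>simp add: divide_simps power2_eq_square algebra_simps\<close>)
  qed
  ultimately have "(semicircle c r has_integral F (c + r) - F (c - r)) {c - r..c + r}"
    using r by (intro fundamental_theorem_of_calculus_interior)
      (auto simp: has_real_derivative_iff_has_vector_derivative[symmetric])
  moreover have "F (c + r) - F (c - r) = pi * r\<^sup>2 / 2"
    using r by (simp add: F_def algebra_simps)
  ultimately show ?thesis by simp
qed

definition semicircle_div_primitive :: "real \<Rightarrow> real \<Rightarrow> real \<Rightarrow> real \<Rightarrow> real" where
  "semicircle_div_primitive c r a l =
     sgn (a - c) * sqrt ((a - c)\<^sup>2 - r\<^sup>2) * arcsin (moebius_subst c r a l)
     + ((a - c) * arcsin ((l - c) / r) - semicircle c r l)"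

lemma semicircle_div_primitive_boundary:
  assumes "\<bar>a - c\<bar> = r"
  shows "semicircle_div_primitive c r a l = (a - c) * arcsin ((l - c) / r) - semicircle c r l"
proof -
  have "(a - c)\<^sup>2 = r\<^sup>2" using assms by (metis power2_abs)
  then show ?thesis by (simp add: semicircle_div_primitive_def)
qed

lemma continuous_on_semicircle_div_primitive:
  assumes r: "r > 0" and d: "r \<le> \<bar>a - c\<bar>"
  shows "continuous_on {c - r..c + r} (semicircle_div_primitive c r a)"
proof -
  have G: "continuous_on {c - r..c + r} (\<lambda>l. (a - c) * arcsin ((l - c) / r) - semicircle c r l)"
    using r by (intro continuous_intros continuous_on_semicircle) (auto simp: field_simps)
  show ?thesis
  proof (cases "r < \<bar>a - c\<bar>")
    case True
    then show ?thesis
      unfolding semicircle_div_primitive_def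
      by (intro continuous_on_add continuous_on_mult_left continuous_on_arcsin_moebius_subst r G)
  qed (use d G in \<open>simp add: semicircle_div_primitive_boundary\<close>)
qed

lemma has_real_derivative_semicircle_div_primitive:
  assumes r: "r > 0" and d: "r \<le> \<bar>a - c\<bar>" and l: "c - r < l" "l < c + r"
  shows "(semicircle_div_primitive c r a has_real_derivative semicircle c r l / (a - l)) (at l)"
proof -
  define S R where "S = sqrt ((a - c)\<^sup>2 - r\<^sup>2)" and "R = semicircle c r l"
  have "r\<^sup>2 \<le> (a - c)\<^sup>2" using d abs_le_square_iff[of r "a - c"] r by simp
  then have S2: "S\<^sup>2 = (a - c)\<^sup>2 - r\<^sup>2" by (simp add: S_def)
  have R: "R > 0" "R\<^sup>2 = r\<^sup>2 - (l - c)\<^sup>2"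
    using l semicircle_pos[of c r l] semicircle_sq[of c r l] by (auto simp: R_def)
  have "a - l \<noteq> 0" using d l by auto
  have "((\<lambda>l. (a - c) * arcsin ((l - c) / r) - semicircle c r l) has_real_derivative
      (a - c) * (1 / R) - (c - l) / R) (at l)"
    unfolding R_def
    by (intro DERIV_diff DERIV_cmult has_real_derivative_arcsin_semicircle
        has_real_derivative_semicircle r l)
  then have G: "((\<lambda>l. (a - c) * arcsin ((l - c) / r) - semicircle c r l) has_real_derivative
      (a - c + (l - c)) / R) (at l)"
    by (rule DERIV_cong) (simp add: diff_divide_distrib add_divide_distrib)
  have "(semicircle_div_primitive c r a has_real_derivative - S\<^sup>2 / ((a - l) * R) + (a - c + (l - c)) / R) (at l)"
  proof (cases "r < \<bar>a - c\<bar>")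
    case True
    have "sgn (a - c) * sgn (a - c) = 1" using True r by (auto simp: sgn_if)
    have "((\<lambda>l. arcsin (moebius_subst c r a l)) has_real_derivative - sgn (a - c) * S / ((a - l) * R)) (at l)"
      using has_real_derivative_arcsin_moebius_subst[OF r True l] by (simp add: S_def R_def)
    from DERIV_add[OF DERIV_cmult[OF this, of "sgn (a - c) * S"] G] show ?thesis
      unfolding semicircle_div_primitive_def S_def[symmetric]
      by (rule DERIV_cong) (use \<open>sgn (a - c) * sgn (a - c) = 1\<close> in \<open>simp add: power2_eq_square\<close>)
  next
    case False
    then have "\<bar>a - c\<bar> = r" "S = 0" using d S2 by simp_all
    then have "semicircle_div_primitive c r a = (\<lambda>l. (a - c) * arcsin ((l - c) / r) - semicircle c r l)"
      by (intro ext semicircle_div_primitive_boundary)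
    then show ?thesis using G \<open>S = 0\<close> by simp
  qed
  moreover have "- S\<^sup>2 / ((a - l) * R) + (a - c + (l - c)) / R = R / (a - l)"
    using R \<open>a - l \<noteq> 0\<close> unfolding S2
    by (simp add: divide_simps) (simp add: power2_eq_square algebra_simps)
  ultimately show ?thesis by (simp add: R_def)
qed

lemma semicircle_div_primitive_endpoints:
  assumes r: "r > 0" and d: "r \<le> \<bar>a - c\<bar>"
  shows "semicircle_div_primitive c r a (c + r) - semicircle_div_primitive c r a (c - r)
    = pi * ((a - c) - sgn (a - c) * sqrt ((a - c)\<^sup>2 - r\<^sup>2))"
proof (cases "r < \<bar>a - c\<bar>")
  case True
  then show ?thesis
    using r by (simp add: semicircle_div_primitive_def moebius_subst_endpoints algebra_simps)
qed (use r d in \<open>simp add: semicircle_div_primitive_boundary algebra_simps\<close>)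

lemma has_integral_semicircle_div:
  assumes r: "r > 0" and d: "r \<le> \<bar>a - c\<bar>"
  shows "((\<lambda>l. semicircle c r l / (a - l)) has_integral
           pi * ((a - c) - sgn (a - c) * sqrt ((a - c)\<^sup>2 - r\<^sup>2))) {c - r..c + r}"
  unfolding semicircle_div_primitive_endpoints[OF r d, symmetric] using r
  by (intro fundamental_theorem_of_calculus_interior continuous_on_semicircle_div_primitive[OF r d])
    (auto simp: has_real_derivative_iff_has_vector_derivative[symmetric]
      intro!: has_real_derivative_semicircle_div_primitive[OF r d])

lemma has_integral_semicircle_div_sq:
  assumes r: "r > 0" and c: "r < c"
  shows "((\<lambda>l. semicircle c r l / l\<^sup>2) has_integral pi * (c / sqrt (c\<^sup>2 - r\<^sup>2) - 1)) {c - r..c + r}"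
proof -
  define S where "S = sqrt (c\<^sup>2 - r\<^sup>2)"
  have "r\<^sup>2 < c\<^sup>2" using r c by (simp add: power_strict_mono)
  then have S: "S > 0" "(0 - c)\<^sup>2 - r\<^sup>2 = S\<^sup>2" by (auto simp: S_def)
  have d: "r < \<bar>0 - c\<bar>" and sgn_c: "sgn (0 - c) = -1" using r c by auto
  define F where
    "F = (\<lambda>l. - (semicircle c r l / l) - c / S * arcsin (moebius_subst c r 0 l) - arcsin ((l - c) / r))"
  have "continuous_on {c - r..c + r} (\<lambda>l. semicircle c r l / l)"
    using c by (intro continuous_intros continuous_on_semicircle) auto
  moreover have "continuous_on {c - r..c + r} (\<lambda>l. arcsin ((l - c) / r))"
    using r by (intro continuous_intros) (auto simp: field_simps)
  ultimately have "continuous_on {c - r..c + r} F"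
    unfolding F_def using continuous_on_arcsin_moebius_subst[OF r d]
    by (intro continuous_on_diff continuous_on_minus continuous_on_mult_left)
  moreover have "(F has_real_derivative semicircle c r l / l\<^sup>2) (at l)"
    if l: "c - r < l" "l < c + r" for l
  proof -
    define R where "R = semicircle c r l"
    have R: "R > 0" "R\<^sup>2 = r\<^sup>2 - (l - c)\<^sup>2"
      using l semicircle_pos[of c r l] semicircle_sq[of c r l] by (auto simp: R_def)
    have "l > 0" using l c by simp
    have M: "((\<lambda>l. arcsin (moebius_subst c r 0 l)) has_real_derivative - sgn (0 - c) * S / ((0 - l) * R)) (at l)"
      using has_real_derivative_arcsin_moebius_subst[OF r d l] by (simp add: S_def R_def)
    have "(F has_real_derivative
        - (((c - l) / R * l - R * 1) / (l * l)) - c / S * (- sgn (0 - c) * S / ((0 - l) * R)) - 1 / R) (at l)"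
      unfolding F_def R_def using \<open>l > 0\<close>
      by (intro DERIV_diff DERIV_minus DERIV_divide DERIV_cmult has_real_derivative_semicircle
          has_real_derivative_arcsin_semicircle M[unfolded R_def] DERIV_ident r l) auto
    then show ?thesis
      by (rule DERIV_cong)
        (use R S \<open>l > 0\<close> sgn_c in \<open>simp add: R_def[symmetric] divide_simps power2_eq_square algebra_simps\<close>)
  qed
  ultimately have "((\<lambda>l. semicircle c r l / l\<^sup>2) has_integral F (c + r) - F (c - r)) {c - r..c + r}"
    using r by (intro fundamental_theorem_of_calculus_interior)
      (auto simp: has_real_derivative_iff_has_vector_derivative[symmetric])
  moreover have "F (c + r) - F (c - r) = pi * (c / S - 1)"
    using r moebius_subst_endpoints[OF r d] by (simp add: F_def algebra_simps)
  ultimately show ?thesis by (simp add: S_def)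
qed

lemma integral_semicircle_div:
  fixes a c r :: real
  assumes "r > 0" "r \<le> \<bar>a - c\<bar>"
  shows "integrable lborel (\<lambda>l. indicator {c - r..c + r} l * (semicircle c r l / (a - l)))"
    "(\<integral>l. indicator {c - r..c + r} l * (semicircle c r l / (a - l)) \<partial>lborel)
       = pi * ((a - c) - sgn (a - c) * sqrt ((a - c)\<^sup>2 - r\<^sup>2))"
proof -
  have "(\<forall>l\<in>{c - r..c + r}. 0 \<le> semicircle c r l / (a - l)) \<or>
        (\<forall>l\<in>{c - r..c + r}. semicircle c r l / (a - l) \<le> 0)"
    using assms semicircle_nonneg[of _ c r]
    by (cases "c + r \<le> a") (auto intro!: divide_nonneg_nonneg divide_nonneg_nonpos)
  from has_integral_one_signed_imp_lborel[OF has_integral_semicircle_div[OF assms] _ this]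
  show "integrable lborel (\<lambda>l. indicator {c - r..c + r} l * (semicircle c r l / (a - l)))"
    "(\<integral>l. indicator {c - r..c + r} l * (semicircle c r l / (a - l)) \<partial>lborel)
       = pi * ((a - c) - sgn (a - c) * sqrt ((a - c)\<^sup>2 - r\<^sup>2))"
    by simp_all
qed

section \<open>Moments of the Marchenko-Pastur density\<close>

definition mp_atom :: "real \<Rightarrow> real" where
  "mp_atom \<beta> = max 0 (1 - 1 / \<beta>)"

lemma mp_atom_nonneg: "0 \<le> mp_atom \<beta>"
  by (simp add: mp_atom_def)

lemma mp_atom_eq_0: "0 < \<beta> \<Longrightarrow> \<beta> \<le> 1 \<Longrightarrow> mp_atom \<beta> = 0"
  by (simp add: mp_atom_def)

lemma lam_minus_eq: "\<beta> \<ge> 0 \<Longrightarrow> lam_minus \<beta> = 1 + \<beta> - 2 * sqrt \<beta>"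
  by (simp add: lam_minus_def power2_eq_square algebra_simps)

lemma lam_plus_eq: "\<beta> \<ge> 0 \<Longrightarrow> lam_plus \<beta> = 1 + \<beta> + 2 * sqrt \<beta>"
  by (simp add: lam_plus_def power2_eq_square algebra_simps)

lemma lam_minus_nonneg: "0 \<le> lam_minus \<beta>"
  by (simp add: lam_minus_def)

lemma lam_t_minus_nonneg: "0 \<le> lam_t_minus \<beta>"
  by (simp add: lam_t_minus_def lam_minus_nonneg)

lemma lam_t_minus_le_lam_minus: "lam_t_minus \<beta> \<le> lam_minus \<beta>"
  by (simp add: lam_t_minus_def lam_minus_def)

lemma mp_radius_le_center: "\<beta> \<ge> 0 \<Longrightarrow> 2 * sqrt \<beta> \<le> 1 + \<beta>"
  using lam_minus_eq[of \<beta>] zero_le_power2[of "1 - sqrt \<beta>"] by (simp add: lam_minus_def)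

lemma mp_radius_less_center: "\<beta> \<ge> 0 \<Longrightarrow> \<beta> \<noteq> 1 \<Longrightarrow> 2 * sqrt \<beta> < 1 + \<beta>"
  using lam_minus_eq[of \<beta>] zero_less_power2[of "1 - sqrt \<beta>"] by (simp add: lam_minus_def)

lemma mp_density_eq_0: "l \<le> lam_minus \<beta> \<or> lam_plus \<beta> \<le> l \<Longrightarrow> mp_density \<beta> l = 0"
  by (auto simp: mp_density_def)

lemma mp_density_nonneg:
  assumes "\<beta> > 0" shows "0 \<le> mp_density \<beta> l"
proof (cases "l \<le> lam_minus \<beta>")
  case False
  then have "l > 0" using lam_minus_nonneg[of \<beta>] by linarith
  then show ?thesis using assms by (auto simp: mp_density_def intro!: divide_nonneg_pos)
qed (simp add: mp_density_eq_0)

lemma borel_measurable_mp_density [measurable]: "mp_density \<beta> \<in> borel_measurable borel"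
  unfolding mp_density_def by measurable

lemma mp_density_eq_semicircle:
  assumes "\<beta> > 0"
  shows "mp_density \<beta> l = indicator {1 + \<beta> - 2 * sqrt \<beta>..1 + \<beta> + 2 * sqrt \<beta>} l
           * (semicircle (1 + \<beta>) (2 * sqrt \<beta>) l / (2 * pi * \<beta> * l))"
  using assms mp_density_eq_0[of l \<beta>]
  by (auto simp: mp_density_def semicircle_def lam_minus_eq lam_plus_eq indicator_def)

lemma mp_density_integral:
  assumes b: "\<beta> > 0"
  shows "integrable lborel (mp_density \<beta>)" "(\<integral>l. mp_density \<beta> l \<partial>lborel) = 1 - mp_atom \<beta>"
proof -
  define c r where "c = 1 + \<beta>" and "r = 2 * sqrt \<beta>"
  have r: "r > 0" "r \<le> \<bar>0 - c\<bar>"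
    using b mp_radius_le_center[of \<beta>] by (auto simp: c_def r_def)
  note S = integral_semicircle_div[OF r]
  have eq: "mp_density \<beta> = (\<lambda>l. - 1 / (2 * pi * \<beta>) * (indicator {c - r..c + r} l * (semicircle c r l / (0 - l))))"
    using b by (auto simp: mp_density_eq_semicircle c_def r_def fun_eq_iff)
  show "integrable lborel (mp_density \<beta>)"
    unfolding eq by (intro integrable_mult_right S(1))
  have "(0 - c)\<^sup>2 - r\<^sup>2 = (1 - \<beta>)\<^sup>2"
    using b by (simp add: c_def r_def power2_eq_square algebra_simps)
  then have sq: "sqrt ((0 - c)\<^sup>2 - r\<^sup>2) = \<bar>1 - \<beta>\<bar>"
    by simp
  show "(\<integral>l. mp_density \<beta> l \<partial>lborel) = 1 - mp_atom \<beta>"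
    unfolding eq integral_mult_right_zero S(2) sq
    using b by (cases "\<beta> \<ge> 1") (auto simp: c_def mp_atom_def sgn_if field_simps)
qed

lemma mp_density_mean:
  assumes b: "\<beta> > 0"
  shows "integrable lborel (\<lambda>l. mp_density \<beta> l * l)" "(\<integral>l. mp_density \<beta> l * l \<partial>lborel) = 1"
proof -
  define c r where "c = 1 + \<beta>" and "r = 2 * sqrt \<beta>"
  have r: "r > 0" using b by (simp add: r_def)
  have "(\<forall>l\<in>{c - r..c + r}. 0 \<le> semicircle c r l) \<or> (\<forall>l\<in>{c - r..c + r}. semicircle c r l \<le> 0)"
    using semicircle_nonneg by blast
  note S = has_integral_one_signed_imp_lborel[OF has_integral_semicircle[OF r] borel_measurable_semicircle this]
  have ae: "AE l in lborel. mp_density \<beta> l * l = 1 / (2 * pi * \<beta>) * (indicator {c - r..c + r} l * semicircle c r l)"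
    using AE_lborel_singleton[of 0] by eventually_elim (use b in \<open>auto simp: mp_density_eq_semicircle c_def r_def\<close>)
  have [measurable]: "(\<lambda>l. mp_density \<beta> l * l) \<in> borel_measurable lborel" by measurable
  show "integrable lborel (\<lambda>l. mp_density \<beta> l * l)"
    using integrable_cong_AE_imp[OF integrable_mult_right[OF S(1)] _ AE_symmetric[OF ae]] by simp
  have "(\<integral>l. mp_density \<beta> l * l \<partial>lborel) = 1 / (2 * pi * \<beta>) * (pi * r\<^sup>2 / 2)"
    using integral_cong_AE[OF _ _ ae] S(2) by simp
  also have "\<dots> = 1" using b by (simp add: r_def power_mult_distrib)
  finally show "(\<integral>l. mp_density \<beta> l * l \<partial>lborel) = 1" .
qed

definition mp_stieltjes :: "real \<Rightarrow> real \<Rightarrow> real" where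
  "mp_stieltjes \<beta> w =
     (w - 1 + \<beta> - sgn (w - (1 + \<beta>)) * sqrt ((w - (1 + \<beta>))\<^sup>2 - 4 * \<beta>)) / (2 * \<beta> * w)"

lemma mp_density_stieltjes:
  assumes b: "\<beta> > 0" and w: "w \<noteq> 0" "2 * sqrt \<beta> \<le> \<bar>w - (1 + \<beta>)\<bar>"
  shows "integrable lborel (\<lambda>l. mp_density \<beta> l / (w - l))"
    "(\<integral>l. mp_density \<beta> l / (w - l) \<partial>lborel) = mp_stieltjes \<beta> w - mp_atom \<beta> / w"
proof -
  define c r where "c = 1 + \<beta>" and "r = 2 * sqrt \<beta>"
  have r0: "r > 0" "r \<le> \<bar>0 - c\<bar>"
    using b mp_radius_le_center[of \<beta>] by (auto simp: c_def r_def)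
  have rw: "r > 0" "r \<le> \<bar>w - c\<bar>"
    using b w by (auto simp: c_def r_def)
  note S0 = integral_semicircle_div[OF r0] and Sw = integral_semicircle_div[OF rw]
  define K where "K = 1 / (2 * pi * \<beta> * w)"
  define I where "I = (\<lambda>a l. indicator {c - r..c + r} l * (semicircle c r l / (a - l)))"
  \<comment> \<open>partial fractions: \<open>1 / (l (w - l)) = (1 / l + 1 / (w - l)) / w\<close>\<close>
  have ae: "AE l in lborel. mp_density \<beta> l / (w - l) = K * (- I 0 l + I w l)"
    using AE_lborel_singleton[of 0] AE_lborel_singleton[of w]
  proof eventually_elim
    case (elim l)
    then show ?case using b w
      by (simp add: mp_density_eq_semicircle K_def I_def c_def r_def indicator_def divide_simps)
        (simp add: algebra_simps)
  qed
  have int: "integrable lborel (\<lambda>l. K * (- I 0 l + I w l))"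
    unfolding I_def by (intro integrable_mult_right Bochner_Integration.integrable_add integrable_minus S0(1) Sw(1))
  have [measurable]: "(\<lambda>l. mp_density \<beta> l / (w - l)) \<in> borel_measurable lborel" by measurable
  show "integrable lborel (\<lambda>l. mp_density \<beta> l / (w - l))"
    using integrable_cong_AE_imp[OF int _ AE_symmetric[OF ae]] by simp
  have "(0 - c)\<^sup>2 - r\<^sup>2 = (1 - \<beta>)\<^sup>2" "r\<^sup>2 = 4 * \<beta>"
    using b by (simp_all add: c_def r_def power2_eq_square algebra_simps)
  then have I_vals: "(\<integral>l. I 0 l \<partial>lborel) = pi * (- c + \<bar>1 - \<beta>\<bar>)"
    "(\<integral>l. I w l \<partial>lborel) = pi * ((w - c) - sgn (w - c) * sqrt ((w - c)\<^sup>2 - 4 * \<beta>))"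
    using S0(2) Sw(2) b by (simp_all add: I_def c_def)
  have "(\<integral>l. mp_density \<beta> l / (w - l) \<partial>lborel) = K * (- (\<integral>l. I 0 l \<partial>lborel) + (\<integral>l. I w l \<partial>lborel))"
    using integral_cong_AE[OF _ _ ae] S0(1) Sw(1) by (simp add: I_def)
  also have "\<dots> = K * (- (pi * (- c + \<bar>1 - \<beta>\<bar>)) + pi * ((w - c) - sgn (w - c) * sqrt ((w - c)\<^sup>2 - 4 * \<beta>)))"
    by (simp only: I_vals)
  also have "\<dots> = mp_stieltjes \<beta> w - mp_atom \<beta> / w"
    using b w by (cases "\<beta> \<ge> 1") (auto simp: K_def c_def mp_atom_def mp_stieltjes_def field_simps)
  finally show "(\<integral>l. mp_density \<beta> l / (w - l) \<partial>lborel) = mp_stieltjes \<beta> w - mp_atom \<beta> / w" .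
qed

lemma mp_density_inverse:
  assumes b: "0 < \<beta>" "\<beta> < 1"
  shows "integrable lborel (\<lambda>l. mp_density \<beta> l / l)" "(\<integral>l. mp_density \<beta> l / l \<partial>lborel) = 1 / (1 - \<beta>)"
proof -
  define c r where "c = 1 + \<beta>" and "r = 2 * sqrt \<beta>"
  have r: "r > 0" "r < c" using b mp_radius_less_center[of \<beta>] by (auto simp: c_def r_def)
  have sign: "(\<forall>l\<in>{c - r..c + r}. 0 \<le> semicircle c r l / l\<^sup>2) \<or> (\<forall>l\<in>{c - r..c + r}. semicircle c r l / l\<^sup>2 \<le> 0)"
    using semicircle_nonneg by auto
  have "(\<lambda>l. semicircle c r l / l\<^sup>2) \<in> borel_measurable borel" by measurable
  note S = has_integral_one_signed_imp_lborel[OF has_integral_semicircle_div_sq[OF r] this sign]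
  define I where "I = (\<lambda>l. indicator {c - r..c + r} l * (semicircle c r l / l\<^sup>2))"
  have ae: "AE l in lborel. mp_density \<beta> l / l = 1 / (2 * pi * \<beta>) * I l"
    using AE_lborel_singleton[of 0]
    by eventually_elim (use b in \<open>auto simp: I_def mp_density_eq_semicircle c_def r_def power2_eq_square\<close>)
  have [measurable]: "(\<lambda>l. mp_density \<beta> l / l) \<in> borel_measurable lborel" by measurable
  show "integrable lborel (\<lambda>l. mp_density \<beta> l / l)"
    using integrable_cong_AE_imp[OF integrable_mult_right[OF S(1)] _ AE_symmetric[OF ae[unfolded I_def]]] by simp
  have "c\<^sup>2 - r\<^sup>2 = (1 - \<beta>)\<^sup>2"
    using b by (simp add: c_def r_def power2_eq_square algebra_simps)
  then have I: "(\<integral>l. I l \<partial>lborel) = pi * (c / (1 - \<beta>) - 1)"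
    using S(2) b by (simp add: I_def)
  have "(\<integral>l. mp_density \<beta> l / l \<partial>lborel) = (\<integral>l. 1 / (2 * pi * \<beta>) * I l \<partial>lborel)"
    using ae by (intro integral_cong_AE) (auto simp: I_def)
  also have "\<dots> = 1 / (2 * pi * \<beta>) * (pi * (c / (1 - \<beta>) - 1))"
    by (simp only: integral_mult_right_zero I)
  also have "\<dots> = 1 / (1 - \<beta>)"
    using b by (simp add: c_def field_simps)
  finally show "(\<integral>l. mp_density \<beta> l / l \<partial>lborel) = 1 / (1 - \<beta>)" .
qed

section \<open>The Marchenko-Pastur measure\<close>

lemma sets_mp_measure [simp, measurable_cong]: "sets (mp_measure \<beta>) = sets borel"
  by (simp add: mp_measure_def sets.sigma_sets_eq[of borel, simplified])

lemma space_mp_measure [simp]: "space (mp_measure \<beta>) = UNIV"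
  using sets_eq_imp_space_eq[OF sets_mp_measure[of \<beta>]] by simp

text \<open>The atom at 0 is produced by collapsing the unit interval \<open>[-2, -1]\<close>, where the density
  vanishes, onto 0.\<close>

lemma
  assumes b: "\<beta> > 0"
  shows mp_measure_eq_distr:
      "mp_measure \<beta> = distr (density lborel (\<lambda>l. ennreal (mp_density \<beta> l + mp_atom \<beta> * indicator {-2..-1} l)))
         borel (\<lambda>l. if l \<in> {-2..-1} then 0 else l)"
      (is "_ = distr (density lborel (\<lambda>l. ennreal (?g l))) borel ?h")
    and emeasure_mp_measure: "A \<in> sets borel \<Longrightarrow> emeasure (mp_measure \<beta>) A =
      ennreal (mp_atom \<beta>) * indicator A 0 + (\<integral>\<^sup>+ l. ennreal (mp_density \<beta> l) * indicator A l \<partial>lborel)"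
      (is "_ \<Longrightarrow> _ = ?F A")
proof -
  let ?N = "distr (density lborel (\<lambda>l. ennreal (?g l))) borel ?h"
  have vanish: "mp_density \<beta> l = 0" if "l \<in> {-2..-1}" for l
    using that lam_minus_nonneg[of \<beta>] by (intro mp_density_eq_0) auto
  have [measurable]: "?h \<in> borel_measurable borel" "?g \<in> borel_measurable borel"
    by measurable
  have emeasure_N: "emeasure ?N A = ?F A" if [measurable]: "A \<in> sets borel" for A
  proof -
    have "?h -` A \<in> sets borel"
      using measurable_sets_borel[of ?h] by measurable
    then have "emeasure ?N A = (\<integral>\<^sup>+ l. ennreal (?g l) * indicator (?h -` A) l \<partial>lborel)"
      by (simp add: emeasure_distr emeasure_density)
    also have "\<dots> = (\<integral>\<^sup>+ l. ennreal (mp_density \<beta> l) * indicator A l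
        + ennreal (mp_atom \<beta>) * indicator A 0 * indicator {-2..-1} l \<partial>lborel)"
      using vanish mp_atom_nonneg[of \<beta>]
      by (intro nn_integral_cong) (auto simp: indicator_def)
    also have "\<dots> = ?F A"
      by (subst nn_integral_add) (auto simp: nn_integral_cmult_indicator add.commute)
    finally show ?thesis .
  qed
  have ca: "countably_additive (sets borel) ?F"
    unfolding countably_additive_def
    using suminf_emeasure[of _ ?N] by (auto simp: emeasure_N[symmetric] sets.countable_UN)
  show emeasure_mp: "emeasure (mp_measure \<beta>) A = ?F A" if "A \<in> sets borel" for A
    unfolding mp_measure_def mp_atom_def[symmetric]
  proof (rule emeasure_measure_of_sigma[OF _ _ ca that])
    show "sigma_algebra UNIV (sets borel)"
      by (metis sets.sigma_algebra_axioms space_borel)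
  qed (auto simp: positive_def)
  show "mp_measure \<beta> = ?N"
  proof (rule measure_eqI)
    fix A assume "A \<in> sets (mp_measure \<beta>)"
    then have "A \<in> sets borel" by simp
    then show "emeasure (mp_measure \<beta>) A = emeasure ?N A"
      by (simp only: emeasure_mp emeasure_N)
  qed simp
qed

lemma integral_mp_measure:
  assumes b: "\<beta> > 0" and [measurable]: "f \<in> borel_measurable borel"
    and f: "integrable lborel (\<lambda>l. mp_density \<beta> l * f l)"
  shows "integrable (mp_measure \<beta>) f"
    "(\<integral>l. f l \<partial>mp_measure \<beta>) = mp_atom \<beta> * f 0 + (\<integral>l. mp_density \<beta> l * f l \<partial>lborel)"
proof -
  define g where "g = (\<lambda>l::real. mp_density \<beta> l + mp_atom \<beta> * indicator {-2..-1} l)"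
  define h where "h = (\<lambda>l::real. if l \<in> {-2..-1} then 0 else l)"
  have [measurable]: "g \<in> borel_measurable borel" "h \<in> borel_measurable borel"
    unfolding g_def h_def by measurable
  have g_nonneg: "AE l in lborel. 0 \<le> g l"
    using mp_density_nonneg[OF b] mp_atom_nonneg[of \<beta>] by (simp add: g_def)
  have eq: "g l *\<^sub>R f (h l) = mp_density \<beta> l * f l + mp_atom \<beta> * f 0 * indicator {-2..-1} l" for l
    using lam_minus_nonneg[of \<beta>] mp_density_eq_0[of l \<beta>]
    by (cases "l \<in> {-2..-1}") (auto simp: g_def h_def)
  have ind: "integrable lborel (\<lambda>l. mp_atom \<beta> * f 0 * indicator {-2..-1::real} l)"
    by (intro integrable_mult_right integrable_real_indicator) auto
  have int: "integrable lborel (\<lambda>l. g l *\<^sub>R f (h l))"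
    unfolding eq by (rule Bochner_Integration.integrable_add[OF f ind])
  have \<mu>: "mp_measure \<beta> = distr (density lborel g) borel h"
    unfolding g_def h_def by (rule mp_measure_eq_distr[OF b])
  show "integrable (mp_measure \<beta>) f"
    unfolding \<mu> using int by (simp add: integrable_distr_eq integrable_density[OF _ _ g_nonneg])
  have "(\<integral>l. f l \<partial>mp_measure \<beta>) = (\<integral>l. g l *\<^sub>R f (h l) \<partial>lborel)"
    unfolding \<mu> by (simp add: integral_distr integral_density[OF _ _ g_nonneg])
  also have "\<dots> = (\<integral>l. mp_density \<beta> l * f l \<partial>lborel) + mp_atom \<beta> * f 0"
    unfolding eq using f ind by (simp add: integral_add)
  finally show "(\<integral>l. f l \<partial>mp_measure \<beta>) = mp_atom \<beta> * f 0 + (\<integral>l. mp_density \<beta> l * f l \<partial>lborel)"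
    by simp
qed

lemma prob_space_mp_measure:
  assumes b: "\<beta> > 0"
  shows "prob_space (mp_measure \<beta>)"
proof (rule prob_spaceI)
  have "(\<integral>\<^sup>+ l. ennreal (mp_density \<beta> l) \<partial>lborel) = ennreal (1 - mp_atom \<beta>)"
    using mp_density_integral[OF b] mp_density_nonneg[OF b]
    by (subst nn_integral_eq_integral) auto
  moreover have "mp_atom \<beta> \<le> 1"
    using b by (simp add: mp_atom_def)
  ultimately show "emeasure (mp_measure \<beta>) (space (mp_measure \<beta>)) = 1"
    using mp_atom_nonneg[of \<beta>] by (simp add: emeasure_mp_measure[OF b] ennreal_plus[symmetric] del: ennreal_plus)
qed

lemma AE_mp_measure_ne:
  assumes b: "\<beta> > 0" and x: "x \<noteq> 0"
  shows "AE l in mp_measure \<beta>. l \<noteq> x"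
proof (rule AE_I')
  have "(\<integral>\<^sup>+ l. ennreal (mp_density \<beta> l) * indicator {x} l \<partial>lborel)
      = (\<integral>\<^sup>+ l. ennreal (mp_density \<beta> x) * indicator {x} l \<partial>lborel)"
    by (intro nn_integral_cong) (simp split: split_indicator)
  then show "{x} \<in> null_sets (mp_measure \<beta>)"
    using x by (simp add: null_sets_def emeasure_mp_measure[OF b])
qed auto

lemma AE_mp_measureI:
  assumes b: "\<beta> > 0"
    and bulk: "\<And>l. lam_minus \<beta> < l \<Longrightarrow> l < lam_plus \<beta> \<Longrightarrow> P l"
    and atom: "mp_atom \<beta> > 0 \<Longrightarrow> P 0"
  shows "AE l in mp_measure \<beta>. P l"
proof (rule AE_I')
  define N where "N = ({..lam_minus \<beta>} \<union> {lam_plus \<beta>..}) - (if mp_atom \<beta> > 0 then {0} else {})"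
  have "N \<in> sets borel" unfolding N_def by auto
  moreover have "(\<integral>\<^sup>+ l. ennreal (mp_density \<beta> l) * indicator N l \<partial>lborel) = (\<integral>\<^sup>+ l. 0 \<partial>(lborel :: real measure))"
    by (intro nn_integral_cong) (auto simp: N_def mp_density_eq_0 split: split_indicator if_splits)
  moreover have "ennreal (mp_atom \<beta>) * indicator N 0 = 0"
    using mp_atom_nonneg[of \<beta>] by (auto simp: N_def split: split_indicator)
  ultimately show "N \<in> null_sets (mp_measure \<beta>)"
    by (simp add: null_sets_def emeasure_mp_measure[OF b])
  show "{l \<in> space (mp_measure \<beta>). \<not> P l} \<subseteq> N"
    using bulk atom by (force simp: N_def not_less)
qed

lemma mp_measure_mean:
  assumes b: "\<beta> > 0"
  shows "integrable (mp_measure \<beta>) (\<lambda>l. l)" "(\<integral>l. l \<partial>mp_measure \<beta>) = 1"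
proof -
  note I = integral_mp_measure[OF b _ mp_density_mean(1)[OF b]]
  show "integrable (mp_measure \<beta>) (\<lambda>l. l)"
    by (rule I(1)) simp
  show "(\<integral>l. l \<partial>mp_measure \<beta>) = 1"
    using I(2) mp_density_mean(2)[OF b] by simp
qed

lemma mp_measure_stieltjes:
  assumes b: "\<beta> > 0" and w: "w \<noteq> 0" "2 * sqrt \<beta> \<le> \<bar>w - (1 + \<beta>)\<bar>"
  shows "integrable (mp_measure \<beta>) (\<lambda>l. 1 / (w - l))"
    "(\<integral>l. 1 / (w - l) \<partial>mp_measure \<beta>) = mp_stieltjes \<beta> w"
proof -
  have eq: "(\<lambda>l. mp_density \<beta> l * (1 / (w - l))) = (\<lambda>l. mp_density \<beta> l / (w - l))"
    by simp
  have meas: "(\<lambda>l. 1 / (w - l)) \<in> borel_measurable borel"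
    by measurable
  note I = integral_mp_measure[OF b meas mp_density_stieltjes(1)[OF b w, folded eq]]
  show "integrable (mp_measure \<beta>) (\<lambda>l. 1 / (w - l))"
    by (rule I(1))
  have "(\<integral>l. 1 / (w - l) \<partial>mp_measure \<beta>) = mp_atom \<beta> / w + (\<integral>l. mp_density \<beta> l / (w - l) \<partial>lborel)"
    unfolding I(2) by simp
  then show "(\<integral>l. 1 / (w - l) \<partial>mp_measure \<beta>) = mp_stieltjes \<beta> w"
    unfolding mp_density_stieltjes(2)[OF b w] by simp
qed

lemma mp_measure_inverse:
  assumes b: "0 < \<beta>" "\<beta> < 1"
  shows "integrable (mp_measure \<beta>) (\<lambda>l. 1 / l)" "(\<integral>l. 1 / l \<partial>mp_measure \<beta>) = 1 / (1 - \<beta>)"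
proof -
  have eq: "(\<lambda>l. mp_density \<beta> l * (1 / l)) = (\<lambda>l. mp_density \<beta> l / l)"
    by simp
  have meas: "(\<lambda>l::real. 1 / l) \<in> borel_measurable borel"
    by measurable
  note I = integral_mp_measure[OF b(1) meas mp_density_inverse(1)[OF b, folded eq]]
  show "integrable (mp_measure \<beta>) (\<lambda>l. 1 / l)"
    by (rule I(1))
  show "(\<integral>l. 1 / l \<partial>mp_measure \<beta>) = 1 / (1 - \<beta>)"
    unfolding I(2) eq mp_density_inverse(2)[OF b] by simp
qed

section \<open>The minimiser of \<open>\<psi>\<^sub>x\<close>\<close>

abbreviation psi_domain :: "real \<Rightarrow> real \<Rightarrow> real set" where
  "psi_domain \<beta> x \<equiv> {-1 / (x - lam_t_minus \<beta>) .. 1 / (lam_plus \<beta> - x)}"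

definition psi_deriv :: "real \<Rightarrow> real \<Rightarrow> real \<Rightarrow> real" where
  "psi_deriv \<beta> x a = (\<integral>l. (l - x) / (1 - a * (l - x)) \<partial>mp_measure \<beta>)"

text \<open>First-order optimality of \<open>a\<close> for the convex function \<open>\<psi>\<^sub>x\<close> on its domain, together
  with the integrability that makes \<open>\<psi>\<^sub>x(a)\<close> and \<open>\<psi>\<^sub>x'(a)\<close> finite.\<close>

definition psi_critical :: "real \<Rightarrow> real \<Rightarrow> real \<Rightarrow> bool" where
  "psi_critical \<beta> x a \<longleftrightarrow>
     a \<in> psi_domain \<beta> x \<and>
     (AE l in mp_measure \<beta>. 1 - a * (l - x) > 0) \<and>
     integrable (mp_measure \<beta>) (\<lambda>l. 1 / (1 - a * (l - x))) \<and>
     integrable (mp_measure \<beta>) (\<lambda>l. (l - x) / (1 - a * (l - x))) \<and>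
     (\<forall>b \<in> psi_domain \<beta> x. 0 \<le> (b - a) * psi_deriv \<beta> x a)"

lemma psi_star_zero_imp_minimal:
  assumes "psi_star \<beta> x 0 = - psi \<beta> x a\<^sub>0"
  shows "psi \<beta> x a\<^sub>0 \<le> psi \<beta> x a"
proof -
  have "ereal (a * 0) - psi \<beta> x a \<le> psi_star \<beta> x 0"
    unfolding psi_star_def by (rule SUP_upper) simp
  then have "- psi \<beta> x a \<le> - psi \<beta> x a\<^sub>0"
    using assms by (cases "psi \<beta> x a") auto
  then show ?thesis
    by simp
qed

lemma psi_zero:
  assumes "lam_t_minus \<beta> < x" "x < lam_plus \<beta>"
  shows "psi \<beta> x 0 = 0"
  using assms by (simp add: psi_def)

lemma integral_ln_affine_less_tangent:
  assumes b: "\<beta> > 0" and x: "x \<noteq> 0" and ne: "a' \<noteq> a"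
    and pos: "AE l in mp_measure \<beta>. 1 - a * (l - x) > 0" "AE l in mp_measure \<beta>. 1 - a' * (l - x) > 0"
    and int: "integrable (mp_measure \<beta>) (\<lambda>l. ln (1 - a * (l - x)))"
      "integrable (mp_measure \<beta>) (\<lambda>l. ln (1 - a' * (l - x)))"
      "integrable (mp_measure \<beta>) (\<lambda>l. (l - x) / (1 - a * (l - x)))"
  shows "(\<integral>l. ln (1 - a' * (l - x)) \<partial>mp_measure \<beta>)
    < (\<integral>l. ln (1 - a * (l - x)) \<partial>mp_measure \<beta>) + (a - a') * psi_deriv \<beta> x a"
proof -
  interpret prob_space "mp_measure \<beta>"
    by (rule prob_space_mp_measure[OF b])
  have quot: "((1 - a' * (l - x)) - (1 - a * (l - x))) / (1 - a * (l - x))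
      = (a - a') * ((l - x) / (1 - a * (l - x)))" for l
    by (simp add: algebra_simps)
  have "AE l in mp_measure \<beta>. 1 - a * (l - x) \<noteq> 1 - a' * (l - x)"
    using AE_mp_measure_ne[OF b x] by eventually_elim (use ne in simp)
  moreover have "integrable (mp_measure \<beta>)
      (\<lambda>l. ((1 - a' * (l - x)) - (1 - a * (l - x))) / (1 - a * (l - x)))"
    unfolding quot by (rule integrable_mult_right[OF int(3)])
  ultimately have "(\<integral>l. ln (1 - a' * (l - x)) \<partial>mp_measure \<beta>) < (\<integral>l. ln (1 - a * (l - x)) \<partial>mp_measure \<beta>)
      + (\<integral>l. ((1 - a' * (l - x)) - (1 - a * (l - x))) / (1 - a * (l - x)) \<partial>mp_measure \<beta>)"
    using emeasure_space_1 by (intro integral_ln_less pos int(1,2)) auto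
  then show ?thesis
    unfolding quot psi_deriv_def by (simp only: integral_mult_right_zero)
qed

lemma psi_critical_unique_minimizer:
  assumes b: "\<beta> > 0" and x: "lam_t_minus \<beta> < x" "x < lam_plus \<beta>"
    and crit: "psi_critical \<beta> x a" and min: "\<And>a'. psi \<beta> x a\<^sub>0 \<le> psi \<beta> x a'"
  shows "a\<^sub>0 = a"
proof (rule ccontr)
  assume ne: "a\<^sub>0 \<noteq> a"
  from crit have a: "a \<in> psi_domain \<beta> x"
      and pos: "AE l in mp_measure \<beta>. 1 - a * (l - x) > 0"
      and int_inv: "integrable (mp_measure \<beta>) (\<lambda>l. 1 / (1 - a * (l - x)))"
      and int_quot: "integrable (mp_measure \<beta>) (\<lambda>l. (l - x) / (1 - a * (l - x)))"
      and var: "\<And>b. b \<in> psi_domain \<beta> x \<Longrightarrow> 0 \<le> (b - a) * psi_deriv \<beta> x a"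
    unfolding psi_critical_def by blast+
  have "psi \<beta> x a\<^sub>0 \<le> 0"
    using min[of 0] psi_zero[OF x] by simp
  then have a\<^sub>0: "a\<^sub>0 \<in> psi_domain \<beta> x"
      and pos\<^sub>0: "AE l in mp_measure \<beta>. 1 - a\<^sub>0 * (l - x) > 0"
      and int_ln\<^sub>0: "integrable (mp_measure \<beta>) (\<lambda>l. ln (1 - a\<^sub>0 * (l - x)))"
    by (auto simp: psi_def split: if_splits)
  interpret prob_space "mp_measure \<beta>"
    by (rule prob_space_mp_measure[OF b])
  have int_ln: "integrable (mp_measure \<beta>) (\<lambda>l. ln (1 - a * (l - x)))"
    using mp_measure_mean(1)[OF b] pos int_inv by (intro integrable_ln) auto
  have "x \<noteq> 0"
    using x lam_t_minus_nonneg[of \<beta>] by simp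
  have "(\<integral>l. ln (1 - a\<^sub>0 * (l - x)) \<partial>mp_measure \<beta>)
      < (\<integral>l. ln (1 - a * (l - x)) \<partial>mp_measure \<beta>) + (a - a\<^sub>0) * psi_deriv \<beta> x a"
    by (rule integral_ln_affine_less_tangent[OF b \<open>x \<noteq> 0\<close> ne pos pos\<^sub>0 int_ln int_ln\<^sub>0 int_quot])
  also have "(a - a\<^sub>0) * psi_deriv \<beta> x a \<le> 0"
    using var[OF a\<^sub>0] mult_minus_left[of "a\<^sub>0 - a" "psi_deriv \<beta> x a"] by simp
  finally have "psi \<beta> x a < psi \<beta> x a\<^sub>0"
    using a a\<^sub>0 pos pos\<^sub>0 int_ln int_ln\<^sub>0 by (simp add: psi_def)
  with min[of a] show False by simp
qed

lemma affine_pos_of_mem_interval: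
  fixes a x l lt lp :: real
  assumes x: "lt < x" "x < lp" and a: "-1 / (x - lt) \<le> a" "a \<le> 1 / (lp - x)"
    and l: "lt < l" "l < lp"
  shows "0 < 1 - a * (l - x)"
proof -
  consider "a * (l - x) \<le> 0" | "0 < a" "x < l" | "a < 0" "l < x"
    by (cases a "0::real" rule: linorder_cases; cases l x rule: linorder_cases)
      (auto simp: mult_le_0_iff)
  then show ?thesis
  proof cases
    case 2
    then have "a * (l - x) < a * (lp - x)" using l by simp
    also have "\<dots> \<le> 1" using a x by (simp add: field_simps)
    finally show ?thesis by simp
  next
    case 3
    then have "a * (l - x) < a * (lt - x)" using l by simp
    also have "\<dots> \<le> 1" using a x by (simp add: field_simps)
    finally show ?thesis by simp
  qed simp
qed

lemma AE_mp_measure_affine_pos: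
  assumes b: "\<beta> > 0" and x: "lam_t_minus \<beta> < x" "x < lam_plus \<beta>"
    and a: "a \<in> psi_domain \<beta> x"
    and atom: "0 < mp_atom \<beta> \<Longrightarrow> 0 < 1 + a * x"
  shows "AE l in mp_measure \<beta>. 1 - a * (l - x) > 0"
proof (rule AE_mp_measureI[OF b])
  fix l assume "lam_minus \<beta> < l" "l < lam_plus \<beta>"
  then show "1 - a * (l - x) > 0"
    using affine_pos_of_mem_interval[OF x] a lam_t_minus_le_lam_minus[of \<beta>] by auto
qed (use atom in simp)

lemma psi_deriv_eq_stieltjes:
  assumes b: "\<beta> > 0" and a: "a \<noteq> 0"
    and w: "x + 1 / a \<noteq> 0" "2 * sqrt \<beta> \<le> \<bar>x + 1 / a - (1 + \<beta>)\<bar>"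
  shows "integrable (mp_measure \<beta>) (\<lambda>l. 1 / (1 - a * (l - x)))"
    "integrable (mp_measure \<beta>) (\<lambda>l. (l - x) / (1 - a * (l - x)))"
    "psi_deriv \<beta> x a = (mp_stieltjes \<beta> (x + 1 / a) / a - 1) / a"
  using integral_affine_quotient[OF prob_space_mp_measure[OF b] sets_mp_measure a
      mp_measure_stieltjes(1)[OF b w] AE_mp_measure_ne[OF b w(1)]]
    mp_measure_stieltjes(2)[OF b w]
  by (simp_all add: psi_deriv_def)

lemma mp_stieltjes_lam_plus:
  assumes "\<beta> > 0"
  shows "mp_stieltjes \<beta> (lam_plus \<beta>) = 1 / (sqrt \<beta> * (1 + sqrt \<beta>))"
proof -
  define s where "s = sqrt \<beta>"
  have s: "0 < s" "\<beta> = s\<^sup>2" using assms by (auto simp: s_def)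
  have w: "lam_plus \<beta> = (1 + s)\<^sup>2" "(lam_plus \<beta> - (1 + \<beta>))\<^sup>2 - 4 * \<beta> = 0"
    using s by (simp_all add: lam_plus_def power2_eq_square algebra_simps flip: s_def)
  have "mp_stieltjes \<beta> (lam_plus \<beta>) = ((1 + s)\<^sup>2 - 1 + s\<^sup>2) / (2 * s\<^sup>2 * (1 + s)\<^sup>2)"
    unfolding mp_stieltjes_def w(2) unfolding w(1) by (simp add: s(2))
  also have "\<dots> = (2 * s * (1 + s)) / ((2 * s * (1 + s)) * (s * (1 + s)))"
    by (simp add: power2_eq_square algebra_simps)
  also have "\<dots> = 1 / (s * (1 + s))"
    using s(1) by simp
  finally show ?thesis by (simp add: s_def)
qed

lemma mp_stieltjes_lam_minus:
  assumes "0 < \<beta>" "\<beta> < 1"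
  shows "mp_stieltjes \<beta> (lam_minus \<beta>) = - 1 / (sqrt \<beta> * (1 - sqrt \<beta>))"
proof -
  define s where "s = sqrt \<beta>"
  have s: "0 < s" "s < 1" "\<beta> = s\<^sup>2" using assms by (auto simp: s_def)
  have w: "lam_minus \<beta> = (1 - s)\<^sup>2" "(lam_minus \<beta> - (1 + \<beta>))\<^sup>2 - 4 * \<beta> = 0"
    using s by (simp_all add: lam_minus_def power2_eq_square algebra_simps flip: s_def)
  have "mp_stieltjes \<beta> (lam_minus \<beta>) = ((1 - s)\<^sup>2 - 1 + s\<^sup>2) / (2 * s\<^sup>2 * (1 - s)\<^sup>2)"
    unfolding mp_stieltjes_def w(2) unfolding w(1) by (simp add: s(3))
  also have "\<dots> = (- 2 * s * (1 - s)) / ((2 * s * (1 - s)) * (s * (1 - s)))"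
    by (simp add: power2_eq_square algebra_simps)
  also have "\<dots> = - 1 / (s * (1 - s))"
    using s(1,2) by simp
  finally show ?thesis by (simp add: s_def)
qed

lemma two_sqrt_le_abs_add_divide: "0 < \<beta> \<Longrightarrow> y \<noteq> 0 \<Longrightarrow> 2 * sqrt \<beta> \<le> \<bar>y + \<beta> / y\<bar>"
proof -
  assume b: "0 < \<beta>" and y: "y \<noteq> 0"
  have "\<bar>y + \<beta> / y\<bar> = \<bar>y\<bar> + \<beta> / \<bar>y\<bar>"
  proof (cases "0 < y")
    case True
    then have "0 < \<beta> / y" using b by simp
    then show ?thesis using True by simp
  next
    case False
    then have "y < 0" "\<beta> / y < 0" using b y by (simp_all add: divide_pos_neg)
    then show ?thesis by simp
  qed
  also have "\<dots> = 2 * sqrt \<beta> + (\<bar>y\<bar> - sqrt \<beta>)\<^sup>2 / \<bar>y\<bar>"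
    using b y by (simp add: power2_eq_square field_simps)
  finally show ?thesis by simp
qed

lemma pole_offset_interior_candidate:
  fixes \<beta> x :: real
  assumes "\<beta> \<noteq> 0" "x \<noteq> 0" "x \<noteq> 1"
  defines "a \<equiv> (x - 1) / (\<beta> * x)"
  shows "x + 1 / a - (1 + \<beta>) = (x - 1) + \<beta> / (x - 1)"
  using assms by (simp add: a_def field_simps)

lemma mp_stieltjes_fixed_point:
  assumes b: "\<beta> > 0" and x: "x > 0" "x \<noteq> 1" "(x - 1)\<^sup>2 < \<beta>" "x - 1 + \<beta> \<noteq> 0"
  defines "a \<equiv> (x - 1) / (\<beta> * x)"
  shows "mp_stieltjes \<beta> (x + 1 / a) = a"
proof -
  define y where "y = x - 1"
  have y: "y \<noteq> 0" "y\<^sup>2 < \<beta>" "y + \<beta> \<noteq> 0"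
    using x by (simp_all add: y_def)
  have w: "x + 1 / a = x * (y + \<beta>) / y"
    using b x y by (simp add: a_def y_def field_simps)
  have d: "x + 1 / a - (1 + \<beta>) = y + \<beta> / y"
    using pole_offset_interior_candidate[of \<beta> x] b x by (simp add: a_def y_def)
  have "(y + \<beta> / y)\<^sup>2 - 4 * \<beta> = (y - \<beta> / y)\<^sup>2"
    using y by (simp add: power2_eq_square field_simps)
  then have sq: "sqrt ((x + 1 / a - (1 + \<beta>))\<^sup>2 - 4 * \<beta>) = \<bar>y - \<beta> / y\<bar>"
    unfolding d by simp
  have sg: "sgn (y + \<beta> / y) * \<bar>y - \<beta> / y\<bar> = \<beta> / y - y"
  proof (cases "y > 0")
    case True
    then have "y < \<beta> / y" "0 < y + \<beta> / y"
      using y b by (simp_all add: field_simps power2_eq_square add_pos_pos)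
    then show ?thesis by simp
  next
    case False
    have "0 < \<beta> + y * y" using b by (simp add: add_pos_nonneg)
    with False have "\<beta> / y < y" "y + \<beta> / y < 0"
      using y by (simp_all add: field_simps power2_eq_square)
    then show ?thesis by simp
  qed
  have "x + 1 / a - 1 + \<beta> - sgn (x + 1 / a - (1 + \<beta>)) * sqrt ((x + 1 / a - (1 + \<beta>))\<^sup>2 - 4 * \<beta>)
      = 2 * y + 2 * \<beta>"
    unfolding sq unfolding d sg using d by linarith
  then have "mp_stieltjes \<beta> (x + 1 / a) = (2 * y + 2 * \<beta>) / (2 * \<beta> * (x + 1 / a))"
    by (simp add: mp_stieltjes_def)
  also have "\<dots> = (2 * (y + \<beta>) * y) / (2 * (y + \<beta>) * (\<beta> * x))"
    using y unfolding w by (simp add: field_simps)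
  also have "\<dots> = y / (\<beta> * x)"
    using y by simp
  also have "\<dots> = a"
    by (simp add: a_def y_def)
  finally show ?thesis .
qed

lemma psi_critical_right_edge:
  assumes b: "\<beta> > 0" and x: "lam_t_minus \<beta> < x" "x < lam_plus \<beta>" and edge: "1 + sqrt \<beta> \<le> x"
  shows "psi_critical \<beta> x (1 / (lam_plus \<beta> - x))"
proof -
  define s D a where "s = sqrt \<beta>" and "D = lam_plus \<beta> - x" and "a = 1 / D"
  have s: "0 < s" "lam_plus \<beta> = (1 + s)\<^sup>2" "lam_plus \<beta> - (1 + \<beta>) = 2 * s"
    using b lam_plus_eq[of \<beta>] by (simp_all add: s_def lam_plus_def)
  have "0 < x" using x lam_t_minus_nonneg[of \<beta>] by simp
  have D: "0 < D" "x + 1 / a = lam_plus \<beta>" using x by (simp_all add: D_def a_def)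
  have "0 < a" "a \<noteq> 0" using D by (simp_all add: a_def)
  have dom: "a \<in> psi_domain \<beta> x"
    using \<open>0 < a\<close> x by (auto simp: a_def D_def intro: order_trans[of _ 0])
  have w: "x + 1 / a \<noteq> 0" "2 * sqrt \<beta> \<le> \<bar>x + 1 / a - (1 + \<beta>)\<bar>"
    using D(2) x(2) \<open>0 < x\<close> s(3) by (linarith, simp add: s_def)
  note deriv = psi_deriv_eq_stieltjes[OF b \<open>a \<noteq> 0\<close> w, unfolded D(2)]
  have "D - s * (1 + s) = 1 + s - x"
    using s(2) by (simp add: D_def power2_eq_square algebra_simps)
  moreover have "psi_deriv \<beta> x a = D * (D - s * (1 + s)) / (s * (1 + s))"
    using s(1) D(1) unfolding deriv(3) mp_stieltjes_lam_plus[OF b] s_def[symmetric]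
    by (simp add: a_def diff_divide_distrib right_diff_distrib left_diff_distrib)
  ultimately have "psi_deriv \<beta> x a = D * (1 + s - x) / (s * (1 + s))"
    by simp
  moreover have "D * (1 + s - x) / (s * (1 + s)) \<le> 0"
    using D(1) s(1) edge[folded s_def] by (intro divide_nonpos_pos mult_nonneg_nonpos mult_pos_pos) auto
  ultimately have "psi_deriv \<beta> x a \<le> 0"
    by simp
  moreover have "AE l in mp_measure \<beta>. 1 - a * (l - x) > 0"
    using \<open>0 < a\<close> \<open>0 < x\<close> by (intro AE_mp_measure_affine_pos[OF b x dom]) (simp add: add_pos_pos)
  ultimately show ?thesis
    using dom deriv(1,2) \<open>0 < a\<close> unfolding psi_critical_def
    by (auto simp: a_def D_def intro: mult_nonpos_nonpos)
qed

lemma psi_critical_left_edge: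
  assumes b: "0 < \<beta>" "\<beta> < 1" and x: "lam_t_minus \<beta> < x" "x < lam_plus \<beta>"
    and edge: "x \<le> 1 - sqrt \<beta>"
  shows "psi_critical \<beta> x (- 1 / (x - lam_minus \<beta>))"
proof -
  define s D a where "s = sqrt \<beta>" and "D = x - lam_minus \<beta>" and "a = - 1 / D"
  have s: "0 < s" "s < 1" "lam_minus \<beta> = (1 - s)\<^sup>2" "lam_minus \<beta> - (1 + \<beta>) = - (2 * s)"
    using b lam_minus_eq[of \<beta>] by (simp_all add: s_def lam_minus_def)
  have lt: "lam_t_minus \<beta> = lam_minus \<beta>" using b by (simp add: lam_t_minus_def)
  have D: "0 < D" "x + 1 / a = lam_minus \<beta>" using x by (simp_all add: D_def a_def lt)
  have "a < 0" "a \<noteq> 0" using D by (simp_all add: a_def)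
  have dom: "a \<in> psi_domain \<beta> x"
    using \<open>a < 0\<close> x by (auto simp: a_def D_def lt intro: order_trans[of _ 0])
  have "0 < lam_minus \<beta>" using s by simp
  then have w: "x + 1 / a \<noteq> 0" "2 * sqrt \<beta> \<le> \<bar>x + 1 / a - (1 + \<beta>)\<bar>"
    using D(2) s(4) by (simp_all add: s_def)
  note deriv = psi_deriv_eq_stieltjes[OF b(1) \<open>a \<noteq> 0\<close> w, unfolded D(2)]
  have "s * (1 - s) - D = 1 - s - x"
    using s(3) by (simp add: D_def power2_eq_square algebra_simps)
  moreover have "psi_deriv \<beta> x a = D * (s * (1 - s) - D) / (s * (1 - s))"
  proof -
    have "s - s * s \<noteq> 0" using s(1,2) by (simp add: right_diff_distrib[symmetric])
    then show ?thesis
      unfolding deriv(3) mp_stieltjes_lam_minus[OF b] s_def[symmetric]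
      by (simp add: a_def field_simps)
  qed
  moreover have "0 \<le> D * (1 - s - x) / (s * (1 - s))"
    using D(1) s(1,2) edge[folded s_def] by (intro divide_nonneg_pos mult_nonneg_nonneg mult_pos_pos) auto
  ultimately have "0 \<le> psi_deriv \<beta> x a"
    by simp
  moreover have "AE l in mp_measure \<beta>. 1 - a * (l - x) > 0"
    using b by (intro AE_mp_measure_affine_pos[OF b(1) x dom]) (simp add: mp_atom_def)
  ultimately show ?thesis
    using dom deriv(1,2) unfolding psi_critical_def
    by (auto simp: a_def D_def lt)
qed

lemma psi_deriv_zero_at_pole_origin:
  assumes b: "0 < \<beta>" "\<beta> < 1"
  defines "x \<equiv> 1 - \<beta>"
  shows "integrable (mp_measure \<beta>) (\<lambda>l. 1 / (1 - (- 1 / x) * (l - x))) \<and>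
    integrable (mp_measure \<beta>) (\<lambda>l. (l - x) / (1 - (- 1 / x) * (l - x))) \<and> psi_deriv \<beta> x (- 1 / x) = 0"
proof -
  have "0 < x" "x + 1 / (- 1 / x) = 0" using b by (simp_all add: x_def)
  note inv = mp_measure_inverse[OF b]
  have "0 < lam_minus \<beta>"
    using b by (simp add: lam_minus_def)
  then have ne: "AE l in mp_measure \<beta>. l \<noteq> x + 1 / (- 1 / x)"
    using b by (intro AE_mp_measureI) (auto simp: \<open>x + 1 / (- 1 / x) = 0\<close> mp_atom_eq_0)
  have int: "integrable (mp_measure \<beta>) (\<lambda>l. 1 / (x + 1 / (- 1 / x) - l))"
    using integrable_minus[OF inv(1)] by (simp add: \<open>x + 1 / (- 1 / x) = 0\<close>)
  have "(\<integral>l. 1 / (x + 1 / (- 1 / x) - l) \<partial>mp_measure \<beta>) = - (1 / x)"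
    using integral_minus[of "mp_measure \<beta>" "\<lambda>l. 1 / l"] inv(2)
    by (simp add: \<open>x + 1 / (- 1 / x) = 0\<close> x_def)
  moreover have "- 1 / x \<noteq> 0" using \<open>0 < x\<close> by simp
  note Q = integral_affine_quotient[OF prob_space_mp_measure[OF b(1)] sets_mp_measure this int ne]
  ultimately show ?thesis
    using Q \<open>0 < x\<close> by (simp add: psi_deriv_def)
qed

lemma psi_deriv_interior:
  assumes b: "\<beta> > 0" and x: "lam_t_minus \<beta> < x" and int: "1 - sqrt \<beta> < x" "x < 1 + sqrt \<beta>"
  defines "a \<equiv> (x - 1) / (\<beta> * x)"
  shows "integrable (mp_measure \<beta>) (\<lambda>l. 1 / (1 - a * (l - x))) \<and>
    integrable (mp_measure \<beta>) (\<lambda>l. (l - x) / (1 - a * (l - x))) \<and> psi_deriv \<beta> x a = 0"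
proof -
  have "0 < x" using x lam_t_minus_nonneg[of \<beta>] by simp
  have "\<bar>x - 1\<bar> < sqrt \<beta>" using int by (simp add: abs_less_iff)
  then have y2: "(x - 1)\<^sup>2 < \<beta>"
    using b by (metis abs_ge_zero power_strict_mono real_sqrt_pow2 less_imp_le pos2 power2_abs)
  consider "x = 1" | "x - 1 + \<beta> = 0" | "x \<noteq> 1" "x - 1 + \<beta> \<noteq> 0" by blast
  then show ?thesis
  proof cases
    case 1
    interpret prob_space "mp_measure \<beta>" by (rule prob_space_mp_measure[OF b])
    show ?thesis
      using mp_measure_mean[OF b] 1 prob_space by (simp add: a_def psi_deriv_def)
  next
    case 2
    then have "x = 1 - \<beta>" by simp
    then have "\<beta> < 1" "a = - 1 / x" using \<open>0 < x\<close> b by (simp_all add: a_def)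
    then show ?thesis
      using psi_deriv_zero_at_pole_origin[OF b \<open>\<beta> < 1\<close>] \<open>x = 1 - \<beta>\<close> by simp
  next
    case 3
    have "a \<noteq> 0" using 3 b \<open>0 < x\<close> by (simp add: a_def)
    have "x + 1 / a = x * (x - 1 + \<beta>) / (x - 1)"
      using 3 b \<open>0 < x\<close> by (simp add: a_def field_simps)
    then have w: "x + 1 / a \<noteq> 0" "2 * sqrt \<beta> \<le> \<bar>x + 1 / a - (1 + \<beta>)\<bar>"
      using 3 \<open>0 < x\<close> two_sqrt_le_abs_add_divide[OF b, of "x - 1"] pole_offset_interior_candidate[of \<beta> x] b
      by (simp_all add: a_def)
    have "mp_stieltjes \<beta> (x + 1 / a) = a"
      using mp_stieltjes_fixed_point[OF b \<open>0 < x\<close> 3(1) y2 3(2)] by (simp add: a_def)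
    then show ?thesis
      using psi_deriv_eq_stieltjes[OF b \<open>a \<noteq> 0\<close> w] \<open>a \<noteq> 0\<close> by simp
  qed
qed

lemma interior_candidate_mem_psi_domain:
  assumes b: "\<beta> > 0" and x: "lam_t_minus \<beta> < x" "x < lam_plus \<beta>"
  shows "(x - 1) / (\<beta> * x) \<in> psi_domain \<beta> x"
proof -
  define s y where "s = sqrt \<beta>" and "y = x - 1"
  have s: "\<beta> = s\<^sup>2" "lam_plus \<beta> = (1 + s)\<^sup>2" "lam_minus \<beta> = (1 - s)\<^sup>2"
    using b by (simp_all add: s_def lam_plus_def lam_minus_def)
  have "0 < x" using x lam_t_minus_nonneg[of \<beta>] by simp
  then have bx: "0 < \<beta> * x" using b by simp
  have "y * (lam_plus \<beta> - x) - \<beta> * x = - (s - y)\<^sup>2"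
    unfolding s(2) unfolding s(1) by (simp add: y_def power2_eq_square algebra_simps)
  then have "y * (lam_plus \<beta> - x) \<le> \<beta> * x"
    by (smt (verit) zero_le_power2)
  then have hi: "y / (\<beta> * x) \<le> 1 / (lam_plus \<beta> - x)"
    using x bx by (simp add: divide_simps)
  have lo: "-1 / (x - lam_t_minus \<beta>) \<le> y / (\<beta> * x)"
  proof (cases "\<beta> \<ge> 1")
    case True
    then show ?thesis
      using \<open>0 < x\<close> bx by (simp add: lam_t_minus_def y_def divide_simps)
  next
    case False
    then have lt: "lam_t_minus \<beta> = lam_minus \<beta>" by (simp add: lam_t_minus_def)
    have "y * (x - lam_minus \<beta>) + \<beta> * x = (y + s)\<^sup>2"
      unfolding s(3) unfolding s(1) by (simp add: y_def power2_eq_square algebra_simps)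
    then have "- (\<beta> * x) \<le> y * (x - lam_minus \<beta>)"
      by (smt (verit) zero_le_power2)
    then show ?thesis
      using x bx by (simp add: lt divide_simps)
  qed
  show ?thesis
    using lo hi by (simp add: y_def)
qed

lemma psi_critical_interior:
  assumes b: "\<beta> > 0" and x: "lam_t_minus \<beta> < x" "x < lam_plus \<beta>"
    and int: "1 - sqrt \<beta> < x" "x < 1 + sqrt \<beta>"
  shows "psi_critical \<beta> x ((1 / \<beta>) * ((x - 1) / x))"
proof -
  define a where "a = (x - 1) / (\<beta> * x)"
  have "0 < x" using x lam_t_minus_nonneg[of \<beta>] by simp
  have dom: "a \<in> psi_domain \<beta> x"
    unfolding a_def by (rule interior_candidate_mem_psi_domain[OF b x])
  have "AE l in mp_measure \<beta>. 1 - a * (l - x) > 0"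
  proof (rule AE_mp_measure_affine_pos[OF b x dom])
    assume "0 < mp_atom \<beta>"
    then have "1 < \<beta>" using b mp_atom_eq_0[OF b] by fastforce
    moreover have "1 + a * x = (\<beta> + x - 1) / \<beta>"
      using b \<open>0 < x\<close> by (simp add: a_def field_simps)
    ultimately show "0 < 1 + a * x"
      using \<open>0 < x\<close> by simp
  qed
  then have "psi_critical \<beta> x a"
    using dom psi_deriv_interior[OF b x(1) int] by (simp add: psi_critical_def a_def)
  then show ?thesis
    by (simp add: a_def)
qed

theorem proposition5:
  fixes \<beta> x \<alpha>s :: real
  assumes "\<beta> > 0"
    and "lam_t_minus \<beta> < x" and "x < lam_plus \<beta>"
    and "psi_star \<beta> x 0 = - psi \<beta> x \<alpha>s"
  shows "\<alpha>s = (if x \<ge> 1 + sqrt \<beta> then 1 / (lam_plus \<beta> - x)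
               else if x \<le> 1 - sqrt \<beta> \<and> \<beta> < 1 then - 1 / (x - lam_minus \<beta>)
               else (1 / \<beta>) * ((x - 1) / x))"
proof -
  note b = assms(1) and x = assms(2,3)
  note unique = psi_critical_unique_minimizer[OF b x _ psi_star_zero_imp_minimal[OF assms(4)]]
  consider (right) "1 + sqrt \<beta> \<le> x"
    | (left) "\<not> 1 + sqrt \<beta> \<le> x" "x \<le> 1 - sqrt \<beta>" "\<beta> < 1"
    | (interior) "x < 1 + sqrt \<beta>" "\<not> (x \<le> 1 - sqrt \<beta> \<and> \<beta> < 1)"
    by linarith
  then show ?thesis
  proof cases
    case right
    then show ?thesis using unique[OF psi_critical_right_edge[OF b x right]] by simp
  next
    case left
    then show ?thesis using unique[OF psi_critical_left_edge[OF b left(3) x left(2)]] by simp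
  next
    case interior
    have "1 - sqrt \<beta> < x"
    proof (cases "\<beta> < 1")
      case False
      then have "1 - sqrt \<beta> \<le> 0" by simp
      then show ?thesis using x lam_t_minus_nonneg[of \<beta>] by linarith
    qed (use interior in auto)
    then show ?thesis
      using interior unique[OF psi_critical_interior[OF b x _ interior(1)]] by auto
  qed
qed

end
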